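(* Let $d \ge 3$ and $N\ge1$. Let $w_0$ be uniform on the unit sphere $\mathbb{S}^{d-1}$, independent of $N$ i.i.d. samples $(x^{(s)},y^{(s)})$ with $x^{(s)}$ uniform on $\{\pm1\}^d$ and $y^{(s)} = x^{(s)}_1x^{(s)}_2$, and let \[ q_0 := w_0^\top \widehat M w_0 = \frac1N\sum_{s=1}^N y^{(s)}\big(x^{(s)\top}w_0\big)^2 . \] Let $c_0 \in (0,\frac{\sqrt3}{2})$ and $p_{PZ}(c) := (1-1/\sqrt2)\cdot\frac{(1-\frac43c^2)^2}{3^8}$. Then \[ \Pr\Big[|q_0| \ge \frac{c_0}{\sqrt N}\Big] \ge p_{PZ}(c_0). \] For example, with $c_0 = \sqrt{3/8}$ one has $p_{PZ}(c_0) = \frac{2-\sqrt2}{8\cdot 3^8}$.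
   Context: $\widehat M := \frac1N\sum_{s=1}^N y^{(s)}x^{(s)}x^{(s)\top}$ is the empirical moment matrix of the samples. *)

theory Defs
  imports "HOL-Analysis.Analysis"
begin

text \<open>Vectors in R^d are represented as functions nat => real restricted to the
  index set {..<d} (coordinates 1..d of the paper are 0..d-1 here).\<close>

definition euclid_norm :: "nat \<Rightarrow> (nat \<Rightarrow> real) \<Rightarrow> real" where
  "euclid_norm d w = sqrt (\<Sum>i<d. (w i)^2)"

definition lebesgue_Rd :: "nat \<Rightarrow> (nat \<Rightarrow> real) measure" where
  "lebesgue_Rd d = PiM {..<d} (\<lambda>_. lborel)"

definition unit_ball :: "nat \<Rightarrow> (nat \<Rightarrow> real) set" where
  "unit_ball d = {w \<in> space (lebesgue_Rd d). euclid_norm d w \<le> 1}"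

text \<open>Uniform (normalised surface) measure on the unit sphere S^{d-1}, realised as the
  cone measure: the image of the uniform distribution on the unit ball under radial
  projection w |-> w / |w|.\<close>
definition uniform_sphere :: "nat \<Rightarrow> (nat \<Rightarrow> real) measure" where
  "uniform_sphere d =
     distr (uniform_measure (lebesgue_Rd d) (unit_ball d)) (lebesgue_Rd d)
       (\<lambda>w. restrict (\<lambda>i. w i / euclid_norm d w) {..<d})"

definition hypercube :: "nat \<Rightarrow> (nat \<Rightarrow> real) set" where
  "hypercube d = PiE {..<d} (\<lambda>_. {-1, 1})"

definition samples_measure :: "nat \<Rightarrow> nat \<Rightarrow> (nat \<Rightarrow> nat \<Rightarrow> real) measure" where
  "samples_measure d N = PiM {..<N} (\<lambda>_. uniform_count_measure (hypercube d))"

definition joint_measure :: "nat \<Rightarrow> nat \<Rightarrow> ((nat \<Rightarrow> real) \<times> (nat \<Rightarrow> nat \<Rightarrow> real)) measure" where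
  "joint_measure d N = uniform_sphere d \<Otimes>\<^sub>M samples_measure d N"

text \<open>Label y = x_1 x_2 (indices 0 and 1 here).\<close>
definition label :: "(nat \<Rightarrow> real) \<Rightarrow> real" where
  "label x = x 0 * x 1"

definition q0 :: "nat \<Rightarrow> nat \<Rightarrow> (nat \<Rightarrow> real) \<Rightarrow> (nat \<Rightarrow> nat \<Rightarrow> real) \<Rightarrow> real" where
  "q0 d N w xs = (1 / real N) * (\<Sum>s<N. label (xs s) * (\<Sum>i<d. xs s i * w i)^2)"

definition p_PZ :: "real \<Rightarrow> real" where
  "p_PZ c = (1 - 1 / sqrt 2) * (1 - 4/3 * c^2)^2 / 3^8"

end

(*
  Fix a unit vector w. The summands Y = y (x^T w)^2 of q0 are i.i.d., and |Y| = (x^T w)^2 is the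
  square of a Rademacher sum, whose moments are dominated by the Gaussian ones, so E Y^4 <= 105.
  Pairing x with the point obtained by flipping x_1 (which negates y) shows Var Y >= 1. For the
  empirical mean q0 this gives E q0^2 >= 1/N and E q0^4 <= 6808 (E q0^2)^2, and Paley-Zygmund for
  q0^2 yields P(|q0| >= c0/sqrt N) >= (1 - c0^2)^2 / 6808 >= p_PZ(c0). Since w_0 is almost surely
  a unit vector, Fubini finishes the proof.
*)
theory Submission
  imports Defs "HOL-Probability.Probability"
begin

section \<open>Averages over finite sets\<close>

definition average :: "'a set \<Rightarrow> ('a \<Rightarrow> real) \<Rightarrow> real" where
  "average A f = (\<Sum>x\<in>A. f x) / real (card A)"

lemma average_const [simp]: "finite A \<Longrightarrow> A \<noteq> {} \<Longrightarrow> average A (\<lambda>_. c) = c"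
  by (simp add: average_def)

lemma average_add [simp]: "average A (\<lambda>x. f x + g x) = average A f + average A g"
  by (simp add: average_def sum.distrib add_divide_distrib)

lemma average_diff [simp]: "average A (\<lambda>x. f x - g x) = average A f - average A g"
  by (simp add: average_def sum_subtractf diff_divide_distrib)

lemma average_cmult [simp]: "average A (\<lambda>x. c * f x) = c * average A f"
  by (simp add: average_def sum_distrib_left)

lemma average_divide [simp]: "average A (\<lambda>x. f x / c) = average A f / c"
  unfolding average_def sum_divide_distrib[symmetric] by simp

lemma average_mono: "(\<And>x. x \<in> A \<Longrightarrow> f x \<le> g x) \<Longrightarrow> average A f \<le> average A g"
  unfolding average_def by (intro divide_right_mono sum_mono) auto

lemma average_nonneg: "(\<And>x. x \<in> A \<Longrightarrow> 0 \<le> f x) \<Longrightarrow> 0 \<le> average A f"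
  unfolding average_def by (intro divide_nonneg_nonneg sum_nonneg) auto

lemma abs_average_le: "\<bar>average A f\<bar> \<le> average A (\<lambda>x. \<bar>f x\<bar>)"
  unfolding average_def by (simp add: divide_right_mono)

lemma average_cong: "(\<And>x. x \<in> A \<Longrightarrow> f x = g x) \<Longrightarrow> average A f = average A g"
  unfolding average_def by (simp cong: sum.cong)

lemma sum_PiE_insert:
  assumes "k \<notin> I"
  shows "(\<Sum>xs\<in>PiE (insert k I) F. f xs) = (\<Sum>xs\<in>PiE I F. \<Sum>y\<in>F k. f (xs(k := y)))"
proof -
  have "(\<Sum>xs\<in>PiE (insert k I) F. f xs) = (\<Sum>(y, xs)\<in>F k \<times> PiE I F. f (xs(k := y)))"
    unfolding PiE_insert_eq
    by (subst sum.reindex[OF inj_combinator[OF assms]]) (simp add: case_prod_unfold comp_def)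
  also have "\<dots> = (\<Sum>xs\<in>PiE I F. \<Sum>y\<in>F k. f (xs(k := y)))"
    by (simp add: sum.cartesian_product' sum.swap[of _ "F k"])
  finally show ?thesis .
qed

lemma average_PiE_lessThan_Suc:
  "average (PiE {..<Suc n} F) f = average (PiE {..<n} F) (\<lambda>xs. average (F n) (\<lambda>y. f (xs(n := y))))"
proof -
  have "{..<Suc n} = insert n {..<n}" by auto
  then show ?thesis
    unfolding average_def
    by (simp add: sum_PiE_insert card_PiE sum_divide_distrib[symmetric] mult.commute)
qed

lemma finite_hypercube [simp]: "finite (hypercube d)"
  unfolding hypercube_def by (simp add: finite_PiE)

lemma hypercube_nonempty [simp]: "hypercube d \<noteq> {}"
  unfolding hypercube_def by (simp add: PiE_eq_empty_iff)

lemma hypercube_coordinate: "x \<in> hypercube d \<Longrightarrow> i < d \<Longrightarrow> x i = -1 \<or> x i = 1"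
  unfolding hypercube_def by auto

lemma average_hypercube_Suc:
  "average (hypercube (Suc d)) f = average (hypercube d) (\<lambda>x. (f (x(d := 1)) + f (x(d := -1))) / 2)"
  unfolding hypercube_def average_PiE_lessThan_Suc by (simp add: average_def add.commute)

lemma average_hypercube_flip:
  assumes "i < d"
  shows "average (hypercube d) (\<lambda>x. f (x(i := - x i))) = average (hypercube d) f"
proof -
  let ?flip = "\<lambda>x::nat \<Rightarrow> real. x(i := - x i)"
  have flip_mem: "?flip x \<in> hypercube d" if "x \<in> hypercube d" for x
    using that assms unfolding hypercube_def PiE_iff by (auto simp: extensional_def)
  have "(\<Sum>x\<in>hypercube d. f (?flip x)) = (\<Sum>x\<in>hypercube d. f x)"
    by (rule sum.reindex_bij_witness[where i = ?flip and j = ?flip]) (simp_all add: flip_mem)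
  then show ?thesis by (simp add: average_def)
qed

section \<open>Moments of Rademacher sums\<close>

definition rademacher_sum :: "nat \<Rightarrow> (nat \<Rightarrow> real) \<Rightarrow> (nat \<Rightarrow> real) \<Rightarrow> real" where
  "rademacher_sum d w x = (\<Sum>i<d. x i * w i)"

lemma average_rademacher_sum_power_Suc:
  "average (hypercube (Suc d)) (\<lambda>x. rademacher_sum (Suc d) w x ^ k) =
   average (hypercube d)
     (\<lambda>x. ((rademacher_sum d w x + w d) ^ k + (rademacher_sum d w x - w d) ^ k) / 2)"
  by (simp add: average_hypercube_Suc rademacher_sum_def)

lemma average_rademacher_sum_square:
  "average (hypercube d) (\<lambda>x. rademacher_sum d w x ^ 2) = (\<Sum>i<d. w i ^ 2)"
proof (induction d)
  case 0
  show ?case by (simp add: rademacher_sum_def)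
next
  case (Suc d)
  let ?S = "rademacher_sum d w" and ?a = "w d"
  have "average (hypercube (Suc d)) (\<lambda>x. rademacher_sum (Suc d) w x ^ 2) =
        average (hypercube d) (\<lambda>x. ?S x ^ 2 + ?a ^ 2)"
    unfolding average_rademacher_sum_power_Suc by (rule average_cong) algebra
  then show ?case by (simp add: Suc.IH)
qed

text \<open>The constants 3, 15, 105 are the Gaussian moments (2k - 1)!!.\<close>

lemma average_rademacher_sum_power4:
  "average (hypercube d) (\<lambda>x. rademacher_sum d w x ^ 4) \<le> 3 * (\<Sum>i<d. w i ^ 2) ^ 2"
proof (induction d)
  case 0
  show ?case by (simp add: rademacher_sum_def)
next
  case (Suc d)
  let ?S = "rademacher_sum d w" and ?t = "w d ^ 2" and ?r = "\<Sum>i<d. w i ^ 2"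
  have "average (hypercube (Suc d)) (\<lambda>x. rademacher_sum (Suc d) w x ^ 4) =
        average (hypercube d) (\<lambda>x. ?S x ^ 4 + 6 * ?t * ?S x ^ 2 + ?t ^ 2)"
    unfolding average_rademacher_sum_power_Suc by (rule average_cong) algebra
  also have "\<dots> \<le> 3 * ?r ^ 2 + 6 * ?t * ?r + ?t ^ 2"
    using Suc.IH by (simp add: average_rademacher_sum_square)
  also have "\<dots> \<le> 3 * (?r + ?t) ^ 2"
    using zero_le_power2[of ?t] by (simp add: power2_eq_square algebra_simps)
  finally show ?case by simp
qed

lemma average_rademacher_sum_power6:
  "average (hypercube d) (\<lambda>x. rademacher_sum d w x ^ 6) \<le> 15 * (\<Sum>i<d. w i ^ 2) ^ 3"
proof (induction d)
  case 0
  show ?case by (simp add: rademacher_sum_def)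
next
  case (Suc d)
  let ?S = "rademacher_sum d w" and ?t = "w d ^ 2" and ?r = "\<Sum>i<d. w i ^ 2"
  have r: "0 \<le> ?r" and t: "0 \<le> ?t" by (simp_all add: sum_nonneg)
  have "average (hypercube (Suc d)) (\<lambda>x. rademacher_sum (Suc d) w x ^ 6) =
        average (hypercube d) (\<lambda>x. ?S x ^ 6 + 15 * ?t * ?S x ^ 4 + 15 * ?t ^ 2 * ?S x ^ 2 + ?t ^ 3)"
    unfolding average_rademacher_sum_power_Suc by (rule average_cong) algebra
  also have "\<dots> \<le> 15 * ?r ^ 3 + 15 * ?t * (3 * ?r ^ 2) + 15 * ?t ^ 2 * ?r + ?t ^ 3"
    using Suc.IH mult_left_mono[OF average_rademacher_sum_power4[of d w] t]
    by (simp add: average_rademacher_sum_square)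
  also have "\<dots> \<le> 15 * (?r + ?t) ^ 3"
    using mult_nonneg_nonneg[OF zero_le_power[OF t, of 2] r] zero_le_power[OF t, of 3]
    by (simp add: power2_eq_square power3_eq_cube algebra_simps)
  finally show ?case by simp
qed

lemma average_rademacher_sum_power8:
  "average (hypercube d) (\<lambda>x. rademacher_sum d w x ^ 8) \<le> 105 * (\<Sum>i<d. w i ^ 2) ^ 4"
proof (induction d)
  case 0
  show ?case by (simp add: rademacher_sum_def)
next
  case (Suc d)
  let ?S = "rademacher_sum d w" and ?t = "w d ^ 2" and ?r = "\<Sum>i<d. w i ^ 2"
  have r: "0 \<le> ?r" and t: "0 \<le> ?t" by (simp_all add: sum_nonneg)
  have "average (hypercube (Suc d)) (\<lambda>x. rademacher_sum (Suc d) w x ^ 8) =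
        average (hypercube d) (\<lambda>x. ?S x ^ 8 + 28 * ?t * ?S x ^ 6 + 70 * ?t ^ 2 * ?S x ^ 4
          + 28 * ?t ^ 3 * ?S x ^ 2 + ?t ^ 4)"
    unfolding average_rademacher_sum_power_Suc by (rule average_cong) algebra
  also have "\<dots> \<le> 105 * ?r ^ 4 + 28 * ?t * (15 * ?r ^ 3) + 70 * ?t ^ 2 * (3 * ?r ^ 2)
      + 28 * ?t ^ 3 * ?r + ?t ^ 4"
    using Suc.IH mult_left_mono[OF average_rademacher_sum_power6[of d w] t]
      mult_left_mono[OF average_rademacher_sum_power4[of d w] zero_le_power[OF t, of 2]]
    by (simp add: average_rademacher_sum_square)
  also have "\<dots> \<le> 105 * (?r + ?t) ^ 4"
    using mult_nonneg_nonneg[OF zero_le_power[OF t, of 2] zero_le_power[OF r, of 2]]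
      mult_nonneg_nonneg[OF zero_le_power[OF t, of 3] r] zero_le_power[OF t, of 4]
    by (simp add: power2_eq_square power3_eq_cube power4_eq_xxxx algebra_simps)
  finally show ?case by simp
qed

section \<open>Empirical means of i.i.d. samples\<close>

lemma paley_zygmund_average:
  fixes Z :: "'a \<Rightarrow> real"
  assumes "finite \<Omega>" and Z_nonneg: "\<And>\<omega>. \<omega> \<in> \<Omega> \<Longrightarrow> 0 \<le> Z \<omega>"
    and "\<theta> \<le> 1" "0 \<le> a" "a \<le> \<theta> * average \<Omega> Z"
  shows "(1 - \<theta>)^2 * average \<Omega> Z ^ 2
           \<le> card {\<omega>\<in>\<Omega>. a \<le> Z \<omega>} / card \<Omega> * average \<Omega> (\<lambda>\<omega>. Z \<omega> ^ 2)"
proof -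
  define A where "A = {\<omega>\<in>\<Omega>. a \<le> Z \<omega>}"
  have A: "finite A" "A \<subseteq> \<Omega>" using \<open>finite \<Omega>\<close> by (auto simp: A_def)
  have "(\<Sum>\<omega>\<in>\<Omega> - A. Z \<omega>) \<le> (\<Sum>\<omega>\<in>\<Omega> - A. a)"
    by (rule sum_mono) (auto simp: A_def)
  also have "\<dots> \<le> card \<Omega> * a"
    using \<open>finite \<Omega>\<close> \<open>0 \<le> a\<close> by (auto intro!: mult_right_mono card_mono)
  also have "\<dots> \<le> \<theta> * (\<Sum>\<omega>\<in>\<Omega>. Z \<omega>)"
  proof (cases "\<Omega> = {}")
    case False
    then have "0 < real (card \<Omega>)" using \<open>finite \<Omega>\<close> by (simp add: card_gt_0_iff)
    then show ?thesis
      using \<open>a \<le> \<theta> * average \<Omega> Z\<close> by (simp add: average_def pos_le_divide_eq mult.commute)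
  qed simp
  finally have "(1 - \<theta>) * (\<Sum>\<omega>\<in>\<Omega>. Z \<omega>) \<le> (\<Sum>\<omega>\<in>A. Z \<omega>)"
    using sum.subset_diff[OF A(2) \<open>finite \<Omega>\<close>, of Z] by (simp add: algebra_simps)
  moreover have "0 \<le> (1 - \<theta>) * (\<Sum>\<omega>\<in>\<Omega>. Z \<omega>)"
    using \<open>\<theta> \<le> 1\<close> Z_nonneg by (simp add: sum_nonneg)
  ultimately have "((1 - \<theta>) * (\<Sum>\<omega>\<in>\<Omega>. Z \<omega>))^2 \<le> (\<Sum>\<omega>\<in>A. Z \<omega>)^2"
    by (rule power_mono)
  also have "\<dots> \<le> card A * (\<Sum>\<omega>\<in>A. Z \<omega> ^ 2)"
    using sum_squared_le_sum_of_squares[of Z A] by (simp add: mult.commute)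
  also have "\<dots> \<le> card A * (\<Sum>\<omega>\<in>\<Omega>. Z \<omega> ^ 2)"
    using A \<open>finite \<Omega>\<close> by (intro mult_left_mono sum_mono2) auto
  finally have "((1 - \<theta>) * (\<Sum>\<omega>\<in>\<Omega>. Z \<omega>))^2 \<le> card A * (\<Sum>\<omega>\<in>\<Omega>. Z \<omega> ^ 2)" .
  then have "((1 - \<theta>) * (\<Sum>\<omega>\<in>\<Omega>. Z \<omega>))^2 / card \<Omega> ^ 2 \<le> card A * (\<Sum>\<omega>\<in>\<Omega>. Z \<omega> ^ 2) / card \<Omega> ^ 2"
    by (rule divide_right_mono) simp
  then show ?thesis
    unfolding A_def[symmetric] average_def
    by (simp add: power_mult_distrib power_divide power2_eq_square mult_ac)
qed

lemma power4_add_le: "((a::real) + b)^4 \<le> 8 * (a^4 + b^4)"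
proof -
  have "(a + b)^2 \<le> 2 * (a^2 + b^2)"
    using zero_le_power2[of "a - b"] by (simp add: power2_eq_square algebra_simps)
  then have "((a + b)^2)^2 \<le> (2 * (a^2 + b^2))^2" by (intro power_mono) auto
  also have "\<dots> \<le> 8 * (a^4 + b^4)"
    using zero_le_power2[of "a^2 - b^2"]
    by (simp add: power2_eq_square power4_eq_xxxx algebra_simps)
  finally show ?thesis by (simp add: power_mult[symmetric])
qed

lemma average_sample_sum_Suc:
  "average (PiE {..<Suc n} (\<lambda>_. H)) (\<lambda>xs. f (\<Sum>s<Suc n. g (xs s))) =
   average (PiE {..<n} (\<lambda>_. H)) (\<lambda>xs. average H (\<lambda>y. f ((\<Sum>s<n. g (xs s)) + g y)))"
  by (simp add: average_PiE_lessThan_Suc)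

context
  fixes H :: "'a set" and g :: "'a \<Rightarrow> real"
  assumes finite_H: "finite H" and H_nonempty: "H \<noteq> {}" and average_g: "average H g = 0"
begin

lemma average_sample_sum: "average (PiE {..<n} (\<lambda>_. H)) (\<lambda>xs. \<Sum>s<n. g (xs s)) = 0"
  for n :: nat
proof (induction n)
  case (Suc n)
  then show ?case
    using average_sample_sum_Suc[of n H "\<lambda>t. t" g] finite_H H_nonempty average_g by simp
qed (simp add: average_def)

lemma average_sample_sum_square:
  "average (PiE {..<n} (\<lambda>_. H)) (\<lambda>xs. (\<Sum>s<n. g (xs s))^2) = real n * average H (\<lambda>y. g y ^ 2)"
  for n :: nat
proof (induction n)
  case (Suc n)
  have "average H (\<lambda>y. (t + g y)^2) = average H (\<lambda>y. t^2 + 2 * t * g y + g y ^ 2)" for t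
    by (rule average_cong) algebra
  then have "average H (\<lambda>y. (t + g y)^2) = t^2 + average H (\<lambda>y. g y ^ 2)" for t
    using finite_H H_nonempty average_g by simp
  then have "average (PiE {..<Suc n} (\<lambda>_. H)) (\<lambda>xs. (\<Sum>s<Suc n. g (xs s))^2) =
      average (PiE {..<n} (\<lambda>_. H)) (\<lambda>xs. (\<Sum>s<n. g (xs s))^2 + average H (\<lambda>y. g y ^ 2))"
    by (simp only: average_sample_sum_Suc[of n H "\<lambda>t. t^2" g])
  also have "\<dots> = real n * average H (\<lambda>y. g y ^ 2) + average H (\<lambda>y. g y ^ 2)"
    using Suc.IH finite_H H_nonempty by (simp add: finite_PiE PiE_eq_empty_iff)
  finally show ?case by (simp add: algebra_simps)
qed (simp add: average_def)

lemma average_sample_sum_power4: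
  "average (PiE {..<n} (\<lambda>_. H)) (\<lambda>xs. (\<Sum>s<n. g (xs s))^4) =
   real n * average H (\<lambda>y. g y ^ 4) + 3 * real n * (real n - 1) * average H (\<lambda>y. g y ^ 2) ^ 2"
  for n :: nat
proof (induction n)
  case (Suc n)
  let ?\<sigma> = "average H (\<lambda>y. g y ^ 2)"
  have "average H (\<lambda>y. (t + g y)^4) =
          average H (\<lambda>y. t^4 + 4 * t^3 * g y + 6 * t^2 * g y ^ 2 + 4 * t * g y ^ 3 + g y ^ 4)" for t
    by (rule average_cong) algebra
  then have "average H (\<lambda>y. (t + g y)^4) =
          t^4 + 6 * ?\<sigma> * t^2 + 4 * average H (\<lambda>y. g y ^ 3) * t + average H (\<lambda>y. g y ^ 4)" for t
    using finite_H H_nonempty average_g by simp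
  then have "average (PiE {..<Suc n} (\<lambda>_. H)) (\<lambda>xs. (\<Sum>s<Suc n. g (xs s))^4) =
      average (PiE {..<n} (\<lambda>_. H)) (\<lambda>xs. (\<Sum>s<n. g (xs s))^4 + 6 * ?\<sigma> * (\<Sum>s<n. g (xs s))^2
        + 4 * average H (\<lambda>y. g y ^ 3) * (\<Sum>s<n. g (xs s)) + average H (\<lambda>y. g y ^ 4))"
    by (simp only: average_sample_sum_Suc[of n H "\<lambda>t. t^4" g])
  also have "\<dots> = real n * average H (\<lambda>y. g y ^ 4) + 3 * real n * (real n - 1) * ?\<sigma> ^ 2
      + 6 * ?\<sigma> * (real n * ?\<sigma>) + average H (\<lambda>y. g y ^ 4)"
    using Suc.IH finite_H H_nonempty
    by (simp add: average_sample_sum average_sample_sum_square finite_PiE PiE_eq_empty_iff)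
  finally show ?case by (simp add: algebra_simps power2_eq_square)
qed (simp add: average_def)

lemma average_empirical_mean_square:
  fixes n :: nat
  assumes "n \<ge> 1"
  shows "average (PiE {..<n} (\<lambda>_. H)) (\<lambda>xs. (\<mu> + (\<Sum>s<n. g (xs s)) / n)^2)
           = \<mu>^2 + average H (\<lambda>y. g y ^ 2) / n"
proof -
  have "average (PiE {..<n} (\<lambda>_. H)) (\<lambda>xs. (\<mu> + (\<Sum>s<n. g (xs s)) / n)^2) =
        average (PiE {..<n} (\<lambda>_. H))
          (\<lambda>xs. \<mu>^2 + (2 * \<mu> / n) * (\<Sum>s<n. g (xs s)) + (1 / n^2) * (\<Sum>s<n. g (xs s))^2)"
    using assms by (intro average_cong) (simp add: power2_eq_square field_simps)
  also have "\<dots> = \<mu>^2 + n * average H (\<lambda>y. g y ^ 2) / n^2"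
    using finite_H H_nonempty
    by (simp add: average_sample_sum average_sample_sum_square finite_PiE PiE_eq_empty_iff)
  also have "\<dots> = \<mu>^2 + average H (\<lambda>y. g y ^ 2) / n"
    using assms by (simp add: power2_eq_square)
  finally show ?thesis .
qed

lemma average_empirical_mean_power4_le:
  fixes n :: nat
  assumes "n \<ge> 1" and "0 \<le> K"
    and kurtosis: "average H (\<lambda>y. g y ^ 4) \<le> K * average H (\<lambda>y. g y ^ 2) ^ 2"
  shows "average (PiE {..<n} (\<lambda>_. H)) (\<lambda>xs. (\<mu> + (\<Sum>s<n. g (xs s)) / n)^4)
           \<le> 8 * (K + 3) * (\<mu>^2 + average H (\<lambda>y. g y ^ 2) / n)^2"
proof -
  let ?\<sigma> = "average H (\<lambda>y. g y ^ 2)"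
  have \<sigma>: "0 \<le> ?\<sigma>" by (rule average_nonneg) simp
  have n: "1 \<le> real n" using assms(1) by simp
  have "average (PiE {..<n} (\<lambda>_. H)) (\<lambda>xs. (\<mu> + (\<Sum>s<n. g (xs s)) / n)^4) \<le>
        average (PiE {..<n} (\<lambda>_. H)) (\<lambda>xs. 8 * \<mu>^4 + (8 / n^4) * (\<Sum>s<n. g (xs s))^4)"
  proof (rule average_mono)
    fix xs
    show "(\<mu> + (\<Sum>s<n. g (xs s)) / n)^4 \<le> 8 * \<mu>^4 + (8 / n^4) * (\<Sum>s<n. g (xs s))^4"
      using power4_add_le[of \<mu> "(\<Sum>s<n. g (xs s)) / n"] by (simp add: power_divide)
  qed
  also have "\<dots> = 8 * \<mu>^4 + (8 / real n ^ 4) *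
      (real n * average H (\<lambda>y. g y ^ 4) + 3 * real n * (real n - 1) * ?\<sigma>^2)"
    using finite_H H_nonempty by (simp add: average_sample_sum_power4 finite_PiE PiE_eq_empty_iff)
  also have "\<dots> \<le> 8 * \<mu>^4 + (8 / real n ^ 4) * (real n ^ 2 * ((K + 3) * ?\<sigma>^2))"
  proof -
    have "real n * average H (\<lambda>y. g y ^ 4) \<le> real n * (K * ?\<sigma>^2)"
      using kurtosis n by (intro mult_left_mono) auto
    also have "\<dots> \<le> real n ^ 2 * (K * ?\<sigma>^2)"
      using n \<open>0 \<le> K\<close> by (intro mult_right_mono) (auto simp: power2_eq_square)
    finally have "real n * average H (\<lambda>y. g y ^ 4) \<le> real n ^ 2 * (K * ?\<sigma>^2)" .
    moreover have "3 * real n * (real n - 1) * ?\<sigma>^2 \<le> real n ^ 2 * (3 * ?\<sigma>^2)"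
      using mult_nonneg_nonneg[of "real n" "?\<sigma>^2"] by (simp add: algebra_simps power2_eq_square)
    ultimately show ?thesis by (intro add_left_mono mult_left_mono) (auto simp: algebra_simps)
  qed
  also have "\<dots> = 8 * \<mu>^4 + 8 * (K + 3) * (?\<sigma> / n)^2"
    using n by (simp add: power_divide power4_eq_xxxx power2_eq_square field_simps)
  also have "\<dots> \<le> 8 * (K + 3) * (\<mu>^2 + ?\<sigma> / n)^2"
  proof -
    have "8 * \<mu>^4 + 8 * (K + 3) * u^2 \<le> 8 * (K + 3) * (\<mu>^2 + u)^2" if "0 \<le> u" for u
    proof -
      have "0 \<le> 8 * (K + 2) * (\<mu>^2)^2 + 16 * (K + 3) * \<mu>^2 * u"
        using \<open>0 \<le> K\<close> that by simp
      then show ?thesis by (simp add: power2_eq_square power4_eq_xxxx algebra_simps)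
    qed
    then show ?thesis using \<sigma> by simp
  qed
  finally show ?thesis .
qed

lemma empirical_mean_anti_concentration:
  fixes n :: nat
  assumes n: "1 \<le> n" and "0 \<le> K"
    and kurtosis: "average H (\<lambda>y. g y ^ 4) \<le> K * average H (\<lambda>y. g y ^ 2) ^ 2"
    and \<sigma>: "1 \<le> average H (\<lambda>y. g y ^ 2)" and c: "0 \<le> c" "c \<le> 1"
  defines "\<Omega> \<equiv> PiE {..<n} (\<lambda>_. H)"
  shows "(1 - c^2)^2 / (8 * (K + 3))
           \<le> card {xs\<in>\<Omega>. c^2 / n \<le> (\<mu> + (\<Sum>s<n. g (xs s)) / n)^2} / card \<Omega>"
proof -
  define Q where "Q xs = \<mu> + (\<Sum>s<n. g (xs s)) / n" for xs
  define m where "m = \<mu>^2 + average H (\<lambda>y. g y ^ 2) / n"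
  have second: "average \<Omega> (\<lambda>xs. Q xs ^ 2) = m"
    unfolding \<Omega>_def Q_def m_def using n by (rule average_empirical_mean_square)
  have fourth: "average \<Omega> (\<lambda>xs. (Q xs ^ 2)^2) \<le> 8 * (K + 3) * m^2"
    using average_empirical_mean_power4_le[OF n \<open>0 \<le> K\<close> kurtosis, of \<mu>]
    unfolding \<Omega>_def Q_def m_def by (simp add: power_mult[symmetric])
  have "1 / n \<le> m"
    unfolding m_def using \<sigma> by (simp add: divide_right_mono add_increasing)
  then have "c^2 * (1 / n) \<le> c^2 * average \<Omega> (\<lambda>xs. Q xs ^ 2)"
    unfolding second by (rule mult_left_mono) simp
  then have PZ: "(1 - c^2)^2 * average \<Omega> (\<lambda>xs. Q xs ^ 2) ^ 2
      \<le> card {xs\<in>\<Omega>. c^2 / n \<le> Q xs ^ 2} / card \<Omega> * average \<Omega> (\<lambda>xs. (Q xs ^ 2)^2)"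
    using c finite_H by (intro paley_zygmund_average) (auto simp: \<Omega>_def power_le_one finite_PiE)
  let ?F = "card {xs\<in>\<Omega>. c^2 / n \<le> Q xs ^ 2} / card \<Omega>"
  have "(1 - c^2)^2 * m^2 \<le> (8 * (K + 3) * ?F) * m^2"
    using PZ mult_left_mono[OF fourth, of ?F] unfolding second by (simp add: mult_ac)
  moreover have "0 < m^2"
    using \<open>1 / n \<le> m\<close> n by (intro zero_less_power) (simp add: order_less_le_trans[of 0 "1 / n"])
  ultimately have "(1 - c^2)^2 \<le> 8 * (K + 3) * ?F" by (simp only: mult_le_cancel_right_pos)
  then show ?thesis
    using \<open>0 \<le> K\<close> unfolding Q_def by (simp add: divide_le_eq mult_ac)
qed

end

section \<open>The statistic q0 in a fixed direction\<close>

definition q0_term :: "nat \<Rightarrow> (nat \<Rightarrow> real) \<Rightarrow> (nat \<Rightarrow> real) \<Rightarrow> real" where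
  "q0_term d w x = label x * rademacher_sum d w x ^ 2"

lemma q0_eq_average_q0_term: "q0 d N w xs = (\<Sum>s<N. q0_term d w (xs s)) / N"
  unfolding q0_def q0_term_def rademacher_sum_def by simp

lemma label_square:
  assumes "2 \<le> d" "x \<in> hypercube d"
  shows "label x ^ 2 = 1"
  using hypercube_coordinate[OF assms(2), of 0] hypercube_coordinate[OF assms(2), of 1] assms(1)
  unfolding label_def by auto

lemma abs_q0_term:
  assumes "2 \<le> d" "x \<in> hypercube d"
  shows "\<bar>q0_term d w x\<bar> = rademacher_sum d w x ^ 2"
proof -
  have "\<bar>label x\<bar> = 1" using label_square[OF assms] by (auto simp: power2_eq_1_iff)
  then show ?thesis by (simp add: q0_term_def abs_mult)
qed

context
  fixes d :: nat and w :: "nat \<Rightarrow> real"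
  assumes d: "2 \<le> d" and unit: "(\<Sum>i<d. w i ^ 2) = 1"
begin

lemma abs_average_q0_term_le: "\<bar>average (hypercube d) (q0_term d w)\<bar> \<le> 1"
proof -
  have "\<bar>average (hypercube d) (q0_term d w)\<bar> \<le> average (hypercube d) (\<lambda>x. \<bar>q0_term d w x\<bar>)"
    by (rule abs_average_le)
  also have "\<dots> = average (hypercube d) (\<lambda>x. rademacher_sum d w x ^ 2)"
    using d by (intro average_cong) (rule abs_q0_term)
  finally show ?thesis by (simp add: average_rademacher_sum_square unit)
qed

lemma average_q0_term_power4_le: "average (hypercube d) (\<lambda>x. q0_term d w x ^ 4) \<le> 105"
proof -
  have "average (hypercube d) (\<lambda>x. q0_term d w x ^ 4)
      = average (hypercube d) (\<lambda>x. rademacher_sum d w x ^ 8)"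
  proof (rule average_cong)
    fix x assume "x \<in> hypercube d"
    then have "q0_term d w x ^ 4 = \<bar>q0_term d w x\<bar> ^ 4" by (simp add: power_even_abs_numeral)
    also have "\<dots> = rademacher_sum d w x ^ 8" using abs_q0_term[OF d \<open>x \<in> hypercube d\<close>] by simp
    finally show "q0_term d w x ^ 4 = rademacher_sum d w x ^ 8" .
  qed
  then show ?thesis using average_rademacher_sum_power8[of d w] unit by simp
qed

lemma average_q0_term_deviation_power4_le:
  assumes "\<bar>c\<bar> \<le> 1"
  shows "average (hypercube d) (\<lambda>x. (q0_term d w x - c)^4) \<le> 848"
proof -
  have "c^4 \<le> 1"
    using power_mono[OF assms, of 4] by (simp add: power_even_abs_numeral)
  have "average (hypercube d) (\<lambda>x. (q0_term d w x - c)^4)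
      \<le> average (hypercube d) (\<lambda>x. 8 * (q0_term d w x ^ 4 + c^4))"
    using power4_add_le[of _ "- c"] by (intro average_mono) simp
  also have "\<dots> \<le> 848"
    using average_q0_term_power4_le \<open>c^4 \<le> 1\<close> by simp
  finally show ?thesis .
qed

text \<open>Flipping the first coordinate negates the label, so q0_term differs at x and at the flipped
  point by the sum of the two squared Rademacher sums, whose average is 2.\<close>

lemma average_q0_term_deviation_square_ge: "1 \<le> average (hypercube d) (\<lambda>x. (q0_term d w x - c)^2)"
proof -
  let ?S = "rademacher_sum d w" and ?Y = "q0_term d w" and ?flip = "\<lambda>x::nat \<Rightarrow> real. x(0 := - x 0)"
  have "2 * (?S x ^ 2 + ?S (?flip x) ^ 2) - 2 \<le> (?Y x - c)^2 + (?Y (?flip x) - c)^2"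
    if x: "x \<in> hypercube d" for x
  proof -
    define a b where "a = ?S x ^ 2" and "b = ?S (?flip x) ^ 2"
    have "label (?flip x) = - label x" by (simp add: label_def)
    then have "?Y x - ?Y (?flip x) = label x * (a + b)"
      by (simp add: q0_term_def a_def b_def algebra_simps)
    then have "(?Y x - ?Y (?flip x))^2 = (a + b)^2"
      using label_square[OF d x] by (simp add: power_mult_distrib)
    then have "(a + b)^2 / 2 \<le> (?Y x - c)^2 + (?Y (?flip x) - c)^2"
      using zero_le_power2[of "?Y x + ?Y (?flip x) - 2 * c"]
      by (simp add: power2_eq_square field_simps)
    moreover have "2 * (a + b) - 2 \<le> (a + b)^2 / 2"
      using zero_le_power2[of "a + b - 2"] by (simp add: power2_eq_square field_simps)
    ultimately show ?thesis unfolding a_def b_def by linarith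
  qed
  then have "average (hypercube d) (\<lambda>x. 2 * (?S x ^ 2 + ?S (?flip x) ^ 2) - 2)
      \<le> average (hypercube d) (\<lambda>x. (?Y x - c)^2 + (?Y (?flip x) - c)^2)"
    by (rule average_mono)
  then show ?thesis
    using d average_hypercube_flip[of 0 d "\<lambda>x. ?S x ^ 2"]
      average_hypercube_flip[of 0 d "\<lambda>x. (?Y x - c)^2"]
    by (simp add: average_rademacher_sum_square unit)
qed

end

lemma threshold_iff_square:
  fixes N :: nat
  assumes "0 \<le> c" "1 \<le> N"
  shows "c / sqrt N \<le> \<bar>q\<bar> \<longleftrightarrow> c^2 / N \<le> q^2"
proof -
  have "c / sqrt N \<le> \<bar>q\<bar> \<longleftrightarrow> \<bar>c / sqrt N\<bar> \<le> \<bar>q\<bar>" using assms by simp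
  also have "\<dots> \<longleftrightarrow> (c / sqrt N)^2 \<le> q^2" by (rule abs_le_square_iff)
  finally show ?thesis using assms by (simp add: power_divide)
qed

text \<open>6808 = 8 * (848 + 3), where 848 = 8 * (105 + 1) bounds the centred fourth moment.\<close>

lemma fraction_large_q0_ge:
  fixes N :: nat
  assumes d: "2 \<le> d" and unit: "(\<Sum>i<d. w i ^ 2) = 1"
    and N: "1 \<le> N" and c0: "0 \<le> c0" "c0 \<le> 1"
  defines "\<Omega> \<equiv> PiE {..<N} (\<lambda>_. hypercube d)"
  shows "(1 - c0^2)^2 / 6808 \<le> card {xs\<in>\<Omega>. c0 / sqrt N \<le> \<bar>q0 d N w xs\<bar>} / card \<Omega>"
proof -
  define \<mu> where "\<mu> = average (hypercube d) (q0_term d w)"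
  define g where "g x = q0_term d w x - \<mu>" for x
  have g: "average (hypercube d) g = 0" by (simp add: g_def[abs_def] \<mu>_def)
  have \<sigma>: "1 \<le> average (hypercube d) (\<lambda>x. g x ^ 2)"
    unfolding g_def by (rule average_q0_term_deviation_square_ge[OF d unit])
  have "average (hypercube d) (\<lambda>x. g x ^ 4) \<le> 848"
    unfolding g_def \<mu>_def
    by (rule average_q0_term_deviation_power4_le[OF d unit abs_average_q0_term_le[OF d unit]])
  also have "\<dots> \<le> 848 * average (hypercube d) (\<lambda>x. g x ^ 2) ^ 2" using \<sigma> by (simp add: one_le_power)
  finally have "(1 - c0^2)^2 / (8 * (848 + 3))
      \<le> card {xs\<in>\<Omega>. c0^2 / N \<le> (\<mu> + (\<Sum>s<N. g (xs s)) / N)^2} / card \<Omega>"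
    unfolding \<Omega>_def using g N \<sigma> c0 by (intro empirical_mean_anti_concentration) simp_all
  moreover have "q0 d N w xs = \<mu> + (\<Sum>s<N. g (xs s)) / N" for xs
    using N by (simp add: q0_eq_average_q0_term g_def sum_subtractf field_simps)
  ultimately show ?thesis
    using threshold_iff_square[OF c0(1) N] by simp
qed

section \<open>The probability space\<close>

lemma emeasure_PiM_uniform_count_measure:
  assumes "finite I" "finite A" "A \<noteq> {}" "B \<subseteq> PiE I (\<lambda>_. A)"
  shows "emeasure (PiM I (\<lambda>_. uniform_count_measure A)) B = card B / card (PiE I (\<lambda>_. A))"
proof -
  interpret product_prob_space "\<lambda>_. uniform_count_measure A"
    unfolding product_prob_space_def product_prob_space_axioms_def product_sigma_finite_def
    using assms(2,3) by (auto intro: prob_space_uniform_count_measure prob_space_imp_sigma_finite)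
  have singleton: "{xs} \<in> sets (PiM I (\<lambda>_. uniform_count_measure A))
      \<and> emeasure (PiM I (\<lambda>_. uniform_count_measure A)) {xs} = 1 / card (PiE I (\<lambda>_. A))"
    if xs: "xs \<in> PiE I (\<lambda>_. A)" for xs
  proof -
    have xs_eq: "{xs} = PiE I (\<lambda>i. {xs i})"
      using xs by (intro PiE_singleton[symmetric]) (simp add: PiE_iff)
    have sets: "{xs i} \<in> sets (uniform_count_measure A)" if "i \<in> I" for i
      using xs that by (auto simp: sets_uniform_count_measure)
    have "emeasure (PiM I (\<lambda>_. uniform_count_measure A)) {xs}
        = (\<Prod>i\<in>I. emeasure (uniform_count_measure A) {xs i})"
      unfolding xs_eq using \<open>finite I\<close> sets by (rule emeasure_PiM)
    also have "\<dots> = (\<Prod>i\<in>I. ennreal (1 / card A))"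
    proof (rule prod.cong)
      fix i assume "i \<in> I"
      then have "{xs i} \<subseteq> A" using xs by auto
      then show "emeasure (uniform_count_measure A) {xs i} = ennreal (1 / card A)"
        using \<open>finite A\<close> by (simp add: emeasure_uniform_count_measure divide_ennreal[symmetric]
            ennreal_of_nat_eq_real_of_nat)
    qed simp
    also have "\<dots> = 1 / card (PiE I (\<lambda>_. A))"
      by (simp add: card_PiE \<open>finite I\<close> ennreal_power power_one_over)
    finally show ?thesis unfolding xs_eq using sets by (auto intro: sets_PiM_I_finite \<open>finite I\<close>)
  qed
  have "finite B" using assms by (auto intro: finite_subset finite_PiE)
  then have "emeasure (PiM I (\<lambda>_. uniform_count_measure A)) B
      = (\<Sum>xs\<in>B. emeasure (PiM I (\<lambda>_. uniform_count_measure A)) {xs})"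
    using singleton assms(4) by (intro emeasure_eq_sum_singleton) auto
  also have "\<dots> = (\<Sum>xs\<in>B. ennreal (1 / card (PiE I (\<lambda>_. A))))"
    using singleton assms(4) by (intro sum.cong) auto
  also have "\<dots> = card B / card (PiE I (\<lambda>_. A))"
    by (simp add: ennreal_of_nat_eq_real_of_nat ennreal_mult[symmetric])
  finally show ?thesis .
qed

lemma space_lebesgue_Rd: "space (lebesgue_Rd d) = PiE {..<d} (\<lambda>_. UNIV)"
  unfolding lebesgue_Rd_def by (simp add: space_PiM)

lemma euclid_norm_measurable [measurable]: "euclid_norm d \<in> borel_measurable (lebesgue_Rd d)"
  unfolding euclid_norm_def lebesgue_Rd_def by measurable

lemma unit_ball_sets [measurable]: "unit_ball d \<in> sets (lebesgue_Rd d)"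
  unfolding unit_ball_def by measurable

lemma radial_projection_measurable [measurable]:
  "(\<lambda>w. restrict (\<lambda>i. w i / euclid_norm d w) {..<d}) \<in> lebesgue_Rd d \<rightarrow>\<^sub>M lebesgue_Rd d"
  unfolding lebesgue_Rd_def euclid_norm_def by measurable

lemma emeasure_lebesgue_Rd_cube:
  assumes "a \<le> b"
  shows "emeasure (lebesgue_Rd d) (PiE {..<d} (\<lambda>_. {a..b})) = ennreal ((b - a) ^ d)"
proof -
  interpret product_sigma_finite "\<lambda>_::nat. lborel :: real measure"
    by (simp add: product_sigma_finite_def sigma_finite_lborel)
  have "emeasure (lebesgue_Rd d) (PiE {..<d} (\<lambda>_. {a..b})) = (\<Prod>i<d. emeasure lborel {a..b})"
    unfolding lebesgue_Rd_def by (rule emeasure_PiM) auto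
  then show ?thesis using assms by (simp add: ennreal_power)
qed

lemma emeasure_unit_ball_finite: "emeasure (lebesgue_Rd d) (unit_ball d) \<noteq> \<infinity>"
proof -
  have "unit_ball d \<subseteq> PiE {..<d} (\<lambda>_. {-1..1})"
  proof
    fix w assume w: "w \<in> unit_ball d"
    then have "(\<Sum>i<d. w i ^ 2) \<le> 1" by (simp add: unit_ball_def euclid_norm_def)
    then have "w i ^ 2 \<le> 1" if "i < d" for i
      using member_le_sum[of i "{..<d}" "\<lambda>i. w i ^ 2"] that by simp
    then show "w \<in> PiE {..<d} (\<lambda>_. {-1..1})"
      using w by (auto simp: unit_ball_def space_lebesgue_Rd PiE_iff abs_square_le_1 abs_le_iff)
  qed
  then have "emeasure (lebesgue_Rd d) (unit_ball d)
      \<le> emeasure (lebesgue_Rd d) (PiE {..<d} (\<lambda>_. {-1..1}))"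
    by (intro emeasure_mono) (auto simp: lebesgue_Rd_def intro!: sets_PiM_I_finite)
  then show ?thesis by (auto simp: emeasure_lebesgue_Rd_cube top_unique)
qed

lemma emeasure_unit_ball_pos:
  assumes "1 \<le> d"
  shows "emeasure (lebesgue_Rd d) (unit_ball d) \<noteq> 0"
proof -
  let ?e = "1 / real d"
  have "PiE {..<d} (\<lambda>_. {-?e..?e}) \<subseteq> unit_ball d"
  proof
    fix w assume w: "w \<in> PiE {..<d} (\<lambda>_. {-?e..?e})"
    have "w i ^ 2 \<le> ?e ^ 2" if "i < d" for i
    proof -
      have "w i \<in> {-?e..?e}" using w that by (simp add: PiE_iff)
      then show ?thesis by (intro abs_le_square_iff[THEN iffD1]) (simp add: abs_le_iff)
    qed
    then have "(\<Sum>i<d. w i ^ 2) \<le> (\<Sum>i<d. ?e ^ 2)" by (intro sum_mono) auto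
    also have "\<dots> \<le> 1" using assms by (simp add: power2_eq_square)
    finally show "w \<in> unit_ball d"
      using w by (auto simp: unit_ball_def euclid_norm_def space_lebesgue_Rd PiE_iff)
  qed
  then have "emeasure (lebesgue_Rd d) (PiE {..<d} (\<lambda>_. {-?e..?e}))
      \<le> emeasure (lebesgue_Rd d) (unit_ball d)"
    by (intro emeasure_mono) auto
  then show ?thesis using assms by (auto simp: emeasure_lebesgue_Rd_cube)
qed

lemma prob_space_uniform_sphere: "1 \<le> d \<Longrightarrow> prob_space (uniform_sphere d)"
  unfolding uniform_sphere_def
  by (intro prob_space.prob_space_distr prob_space_uniform_measure radial_projection_measurable)
    (use emeasure_unit_ball_pos[of d] emeasure_unit_ball_finite[of d] in auto)

lemma sum_square_normalized:
  assumes "i < d" "w i \<noteq> 0"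
  shows "(\<Sum>j<d. (w j / euclid_norm d w)^2) = 1"
proof -
  have "0 < w i ^ 2" using assms by simp
  also have "\<dots> \<le> (\<Sum>j<d. w j ^ 2)" using assms by (intro member_le_sum) auto
  finally have "0 < (\<Sum>j<d. w j ^ 2)" .
  then show ?thesis
    by (simp add: euclid_norm_def power_divide sum_divide_distrib[symmetric])
qed

lemma AE_uniform_sphere_unit_norm:
  assumes "1 \<le> d"
  shows "AE w in uniform_sphere d. (\<Sum>i<d. w i ^ 2) = 1"
proof -
  have "emeasure (lebesgue_Rd d) (PiE {..<d} (\<lambda>_. {0})) = 0"
    using emeasure_lebesgue_Rd_cube[of 0 0 d] assms by simp
  moreover have "PiE {..<d} (\<lambda>_. {0}) \<in> sets (lebesgue_Rd d)"
    unfolding lebesgue_Rd_def by (rule sets_PiM_I_finite) auto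
  ultimately have "PiE {..<d} (\<lambda>_. {0}) \<in> null_sets (lebesgue_Rd d)"
    by (rule null_setsI)
  then have "AE w in lebesgue_Rd d. \<exists>i<d. w i \<noteq> 0"
    by (rule AE_I') (auto simp: space_lebesgue_Rd PiE_def extensional_def fun_eq_iff)
  then have "AE w in lebesgue_Rd d. w \<in> unit_ball d \<longrightarrow>
      (\<Sum>i<d. (restrict (\<lambda>i. w i / euclid_norm d w) {..<d} i)^2) = 1"
    by eventually_elim (auto simp: sum_square_normalized)
  then have "AE w in uniform_measure (lebesgue_Rd d) (unit_ball d).
      (\<Sum>i<d. (restrict (\<lambda>i. w i / euclid_norm d w) {..<d} i)^2) = 1"
    by (rule AE_uniform_measureI[OF unit_ball_sets])
  moreover have "{w \<in> space (lebesgue_Rd d). (\<Sum>i<d. w i ^ 2) = 1} \<in> sets (lebesgue_Rd d)"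
    unfolding lebesgue_Rd_def by measurable
  ultimately show ?thesis
    unfolding uniform_sphere_def by (subst AE_distr_iff) auto
qed

lemma prob_space_samples_measure: "prob_space (samples_measure d N)"
  unfolding samples_measure_def
  by (intro prob_space_PiM prob_space_uniform_count_measure) simp_all

lemma space_samples_measure: "space (samples_measure d N) = PiE {..<N} (\<lambda>_. hypercube d)"
  unfolding samples_measure_def by (simp add: space_PiM space_uniform_count_measure)

lemma sample_function_measurable:
  assumes "s < N"
  shows "(\<lambda>xs. f (xs s)) \<in> borel_measurable (samples_measure d N)"
proof -
  have "(\<lambda>xs. xs s) \<in> samples_measure d N \<rightarrow>\<^sub>M uniform_count_measure (hypercube d)"
    unfolding samples_measure_def using assms by (intro measurable_component_singleton) simp
  moreover have "f \<in> borel_measurable (uniform_count_measure (hypercube d))"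
    by (simp add: measurable_def sets_uniform_count_measure space_uniform_count_measure)
  ultimately show ?thesis by (rule measurable_compose)
qed

lemma uniform_sphere_coordinate_measurable:
  assumes "i < d"
  shows "(\<lambda>w. w i) \<in> borel_measurable (uniform_sphere d)"
proof -
  have "(\<lambda>w. w i) \<in> lebesgue_Rd d \<rightarrow>\<^sub>M lborel"
    unfolding lebesgue_Rd_def using assms by (intro measurable_component_singleton) simp
  then have "(\<lambda>w. w i) \<in> borel_measurable (lebesgue_Rd d)" by simp
  then show ?thesis
    unfolding uniform_sphere_def by (simp cong: measurable_cong_sets)
qed

lemma q0_measurable: "(\<lambda>p. q0 d N (fst p) (snd p)) \<in> borel_measurable (joint_measure d N)"
  unfolding q0_def joint_measure_def
proof (intro borel_measurable_times borel_measurable_const borel_measurable_sum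
    borel_measurable_power)
  fix s assume "s \<in> {..<N}"
  then show "(\<lambda>p. label (snd p s)) \<in> borel_measurable (uniform_sphere d \<Otimes>\<^sub>M samples_measure d N)"
    by (intro measurable_compose[OF measurable_snd sample_function_measurable]) simp
  fix i assume "i \<in> {..<d}"
  show "(\<lambda>p. snd p s i) \<in> borel_measurable (uniform_sphere d \<Otimes>\<^sub>M samples_measure d N)"
    using \<open>s \<in> {..<N}\<close>
      measurable_compose[OF measurable_snd sample_function_measurable[of s N "\<lambda>x. x i"]]
    by simp
  show "(\<lambda>p. fst p i) \<in> borel_measurable (uniform_sphere d \<Otimes>\<^sub>M samples_measure d N)"
    using \<open>i \<in> {..<d}\<close>
    by (intro measurable_compose[OF measurable_fst uniform_sphere_coordinate_measurable]) simp
qed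

lemma emeasure_samples_large_q0_ge:
  fixes N :: nat
  assumes "2 \<le> d" "(\<Sum>i<d. w i ^ 2) = 1" "1 \<le> N" "0 \<le> c0" "c0 \<le> 1"
  shows "ennreal ((1 - c0^2)^2 / 6808)
    \<le> emeasure (samples_measure d N)
         {xs \<in> space (samples_measure d N). c0 / sqrt N \<le> \<bar>q0 d N w xs\<bar>}"
proof -
  let ?\<Omega> = "PiE {..<N} (\<lambda>_. hypercube d)"
  have "emeasure (samples_measure d N) {xs \<in> ?\<Omega>. c0 / sqrt N \<le> \<bar>q0 d N w xs\<bar>}
      = card {xs \<in> ?\<Omega>. c0 / sqrt N \<le> \<bar>q0 d N w xs\<bar>} / card ?\<Omega>"
    unfolding samples_measure_def by (intro emeasure_PiM_uniform_count_measure) auto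
  then show ?thesis
    using fraction_large_q0_ge[OF assms]
    by (simp add: space_samples_measure ennreal_leI del: ennreal_divide_numeral)
qed

lemma measure_joint_large_q0_ge:
  fixes N :: nat
  assumes "2 \<le> d" "1 \<le> N" "0 \<le> c0" "c0 \<le> 1"
  shows "(1 - c0^2)^2 / 6808
    \<le> measure (joint_measure d N)
         {(w, xs) \<in> space (joint_measure d N). c0 / sqrt N \<le> \<bar>q0 d N w xs\<bar>}"
proof -
  let ?E = "{(w, xs) \<in> space (joint_measure d N). c0 / sqrt N \<le> \<bar>q0 d N w xs\<bar>}"
  interpret S: prob_space "samples_measure d N" by (rule prob_space_samples_measure)
  interpret W: prob_space "uniform_sphere d"
    using assms(1) by (intro prob_space_uniform_sphere) simp
  interpret J: pair_prob_space "uniform_sphere d" "samples_measure d N" ..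
  have E: "?E \<in> sets (joint_measure d N)"
  proof -
    have "?E = {p \<in> space (joint_measure d N). c0 / sqrt N \<le> \<bar>q0 d N (fst p) (snd p)\<bar>}" by auto
    also have "\<dots> \<in> sets (joint_measure d N)" using q0_measurable by measurable
    finally show ?thesis .
  qed
  have slice: "ennreal ((1 - c0^2)^2 / 6808) \<le> emeasure (samples_measure d N) (Pair w -` ?E)"
    if "w \<in> space (uniform_sphere d)" "(\<Sum>i<d. w i ^ 2) = 1" for w
  proof -
    have "Pair w -` ?E = {xs \<in> space (samples_measure d N). c0 / sqrt N \<le> \<bar>q0 d N w xs\<bar>}"
      using that(1) by (auto simp: joint_measure_def space_pair_measure)
    then show ?thesis using emeasure_samples_large_q0_ge[OF assms(1) that(2) assms(2-4)] by simp
  qed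
  have "ennreal ((1 - c0^2)^2 / 6808) = (\<integral>\<^sup>+w. ennreal ((1 - c0^2)^2 / 6808) \<partial>uniform_sphere d)"
    by (simp add: W.emeasure_space_1)
  also have "\<dots> \<le> (\<integral>\<^sup>+w. emeasure (samples_measure d N) (Pair w -` ?E) \<partial>uniform_sphere d)"
  proof (rule nn_integral_mono_AE)
    have "1 \<le> d" using assms(1) by simp
    from AE_uniform_sphere_unit_norm[OF this] AE_space
    show "AE w in uniform_sphere d.
        ennreal ((1 - c0^2)^2 / 6808) \<le> emeasure (samples_measure d N) (Pair w -` ?E)"
      by eventually_elim (rule slice)
  qed
  also have "\<dots> = emeasure (joint_measure d N) ?E"
    using E unfolding joint_measure_def by (rule S.emeasure_pair_measure_alt[symmetric])
  finally show ?thesis by (simp add: J.emeasure_eq_measure joint_measure_def)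
qed

lemma p_PZ_le:
  assumes "c^2 \<le> 3/4"
  shows "p_PZ c \<le> (1 - c^2)^2 / 6808"
proof -
  have "(1 - 4/3 * c^2)^2 \<le> (1 - c^2)^2"
    using assms by (intro power_mono) simp_all
  moreover have "1 - 1 / sqrt 2 \<le> 1 / 2"
    using real_sqrt_le_mono[of 2 4] by (simp add: field_simps)
  ultimately have "p_PZ c \<le> 1 / 2 * (1 - c^2)^2 / 3^8"
    unfolding p_PZ_def by (intro divide_right_mono mult_mono) simp_all
  moreover have "0 \<le> p_PZ c" unfolding p_PZ_def by simp
  ultimately show ?thesis by simp
qed

lemma p_PZ_sqrt_3_8: "p_PZ (sqrt (3/8)) = (2 - sqrt 2) / (8 * 3^8)"
proof -
  have "1 / sqrt 2 = sqrt 2 / 2" by (simp add: field_simps)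
  then show ?thesis unfolding p_PZ_def by (simp add: field_simps)
qed

theorem lemma4:
  fixes d N :: nat and c0 :: real
  assumes "d \<ge> 3" and "N \<ge> 1"
    and "0 < c0" and "c0 < sqrt 3 / 2"
  shows "measure (joint_measure d N)
           {(w, xs) \<in> space (joint_measure d N). \<bar>q0 d N w xs\<bar> \<ge> c0 / sqrt (real N)}
         \<ge> p_PZ c0 \<and>
         p_PZ (sqrt (3/8)) = (2 - sqrt 2) / (8 * 3^8)"
proof
  have "c0^2 \<le> (sqrt 3 / 2)^2"
    using assms(3,4) by (intro power_mono) simp_all
  then have c0_sq: "c0^2 \<le> 3/4" by (simp add: power_divide)
  then have "c0 \<le> 1" using abs_square_le_1[of c0] by simp
  have "p_PZ c0 \<le> (1 - c0^2)^2 / 6808" using c0_sq by (rule p_PZ_le)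
  also have "\<dots> \<le> measure (joint_measure d N)
      {(w, xs) \<in> space (joint_measure d N). c0 / sqrt (real N) \<le> \<bar>q0 d N w xs\<bar>}"
    using assms \<open>c0 \<le> 1\<close> by (intro measure_joint_large_q0_ge) simp_all
  finally show "measure (joint_measure d N)
      {(w, xs) \<in> space (joint_measure d N). \<bar>q0 d N w xs\<bar> \<ge> c0 / sqrt (real N)} \<ge> p_PZ c0" .
  show "p_PZ (sqrt (3/8)) = (2 - sqrt 2) / (8 * 3^8)" by (rule p_PZ_sqrt_3_8)
qed

end
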